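(* Let $A\otimes B$ be a two-qubit Pauli operator with $A,B\in\{X,Y,Z\}$, and let $\rho$ be a valid two-qubit density matrix of the form $$\rho=\tfrac14\Big(I\otimes I+\sum_{q}c_q\,q\Big),\qquad c_q\in\mathbb{R}.$$ Here $q$ ranges over the five operators $A\otimes B$ and $A'\otimes B'$ with $A'\in\{X,Y,Z\}\setminus\{A\}$ and $B'\in\{X,Y,Z\}\setminus\{B\}$. Equivalently, $\rho$ is a Group 2 $X$-state with maximally-mixed subsystems, or a Mermin-state $\mathcal{Q}_i$, $i=1,\dots,9$, with all local coefficients zero. Let $\mathcal{M}(\rho)$ be the sum of the two largest eigenvalues of $\beta^T\beta$, where $\beta$ is the $3\times3$ real matrix with entries $\beta_{ij}=\operatorname{Tr}(\rho\,\sigma_i\otimes\sigma_j)$, $\sigma_1=X,\sigma_2=Y,\sigma_3=Z$. Then $\mathcal{M}(\rho)=2$ (i.e. $\rho$ violates the Bell (CHSH) inequality maximally) if and only if $\rho$ is pure, i.e. $\operatorname{Tr}(\rho^2)=1$.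
   Context: Valid means $\rho$ is Hermitian, of trace one and positive semidefinite. By the Horodecki criterion, a two-qubit state violates the Bell (CHSH) inequality iff $\mathcal{M}(\rho)>1$; maximal violation corresponds to the maximal possible value $\mathcal{M}(\rho)=2$. *)

theory Defs
  imports "Jordan_Normal_Form.Matrix" "Jordan_Normal_Form.Char_Poly"
          "HOL-Computational_Algebra.Polynomial" "HOL-Library.Multiset"
begin

(* Pauli matrices sigma_1 = X, sigma_2 = Y, sigma_3 = Z (index 0 = identity) *)
definition pauli :: "nat \<Rightarrow> complex mat" where
  "pauli k = (if k = 1 then mat_of_rows_list 2 [[0, 1], [1, 0]]
              else if k = 2 then mat_of_rows_list 2 [[0, -\<i>], [\<i>, 0]]
              else if k = 3 then mat_of_rows_list 2 [[1, 0], [0, -1]]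
              else 1\<^sub>m 2)"

definition kron :: "complex mat \<Rightarrow> complex mat \<Rightarrow> complex mat" where
  "kron A B = mat (dim_row A * dim_row B) (dim_col A * dim_col B)
     (\<lambda>(i, j). A $$ (i div dim_row B, j div dim_col B) * B $$ (i mod dim_row B, j mod dim_col B))"

definition mtrace :: "'a :: comm_ring_1 mat \<Rightarrow> 'a" where
  "mtrace M = (\<Sum>i < dim_row M. M $$ (i, i))"

definition msum :: "nat \<Rightarrow> 'b set \<Rightarrow> ('b \<Rightarrow> complex mat) \<Rightarrow> complex mat" where
  "msum n S f = mat n n (\<lambda>(i, j). \<Sum>q \<in> S. f q $$ (i, j))"

definition hermitian :: "complex mat \<Rightarrow> bool" where
  "hermitian M \<longleftrightarrow> dim_row M = dim_col M \<and>
     (\<forall>i < dim_row M. \<forall>j < dim_col M. M $$ (i, j) = cnj (M $$ (j, i)))"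

definition psd :: "complex mat \<Rightarrow> bool" where
  "psd M \<longleftrightarrow> (\<forall>v \<in> carrier_vec (dim_row M).
     0 \<le> Re (\<Sum>i < dim_row M. \<Sum>j < dim_col M. cnj (v $ i) * M $$ (i, j) * v $ j))"

definition valid_state :: "complex mat \<Rightarrow> bool" where
  "valid_state \<rho> \<longleftrightarrow> \<rho> \<in> carrier_mat 4 4 \<and> hermitian \<rho> \<and> mtrace \<rho> = 1 \<and> psd \<rho>"

(* correlation matrix beta_ij = Tr(rho sigma_i (x) sigma_j), i,j = 1..3 (0-based storage) *)
definition corr :: "complex mat \<Rightarrow> real mat" where
  "corr \<rho> = mat 3 3 (\<lambda>(i, j). Re (mtrace (\<rho> * kron (pauli (i + 1)) (pauli (j + 1)))))"

definition eigvals_ms :: "real mat \<Rightarrow> real multiset" where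
  "eigvals_ms M = proots (char_poly M)"

definition horodecki_M :: "complex mat \<Rightarrow> real" where
  "horodecki_M \<rho> = (let \<beta> = corr \<rho> in
     sum_list (take 2 (rev (sorted_list_of_multiset (eigvals_ms (transpose_mat \<beta> * \<beta>))))))"

definition support_pairs :: "nat \<Rightarrow> nat \<Rightarrow> (nat \<times> nat) set" where
  "support_pairs a b = {(a, b)} \<union> {(i, j). i \<in> {1, 2, 3} - {a} \<and> j \<in> {1, 2, 3} - {b}}"

end

theory Submission
  imports Defs
begin

(* By orthogonality of the Pauli products, the correlation matrix beta of rho carries the
   coefficients c_q at the five support positions and zeros elsewhere, and
   Tr(rho^2) = (1 + sum c_q^2) / 4.  The entry e = c_ab is alone in its row and column of beta,
   so the eigenvalues of beta^T beta are e^2 and the squared singular values s1 >= s2 of the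
   complementary 2 x 2 block C.

   Positivity of rho, tested on products of eigenvectors of sigma_a and sigma_b, bounds the
   moduli u, w of two off-diagonal matrix elements by 1 + e and 1 - e, and
   {u, w} = {s1 + s2, s1 - s2}.  Hence e^2, s1^2, s2^2 are all at most 1, and
   s1 = 1 forces u = 1 + e and w = 1 - e, i.e. s2 = |e|.  So the two largest eigenvalues sum to
   2 exactly when all three equal 1, that is when e^2 + s1^2 + s2^2 = 3, which is purity. *)

subsection \<open>Kronecker products and traces\<close>

lemma sum_lessThan_mult_div_mod:
  fixes g :: "nat \<Rightarrow> nat \<Rightarrow> 'a::comm_monoid_add"
  shows "(\<Sum>i<n * m. g (i div m) (i mod m)) = (\<Sum>i<n. \<Sum>j<m. g i j)"
proof -
  have "(\<Sum>i<n * m. g (i div m) (i mod m)) =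
        (\<Sum>i<n. \<Sum>k\<in>{i * m..<i * m + m}. g (k div m) (k mod m))"
    by (rule sum.nat_group[symmetric])
  also have "\<dots> = (\<Sum>i<n. \<Sum>j<m. g i j)"
  proof (rule sum.cong[OF refl])
    fix i
    have "(\<Sum>k\<in>{i * m..<i * m + m}. g (k div m) (k mod m)) =
          (\<Sum>j\<in>{0..<m}. g ((j + i * m) div m) ((j + i * m) mod m))"
      using sum.shift_bounds_nat_ivl[of "\<lambda>k. g (k div m) (k mod m)" 0 "i * m" m]
      by (simp add: add.commute)
    also have "\<dots> = (\<Sum>j<m. g i j)"
      by (rule sum.cong) auto
    finally show "(\<Sum>k\<in>{i * m..<i * m + m}. g (k div m) (k mod m)) = (\<Sum>j<m. g i j)" .
  qed
  finally show ?thesis .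
qed

lemma dim_kron [simp]:
  "dim_row (kron A B) = dim_row A * dim_row B"
  "dim_col (kron A B) = dim_col A * dim_col B"
  by (simp_all add: kron_def)

lemma index_kron [simp]:
  "i < dim_row A * dim_row B \<Longrightarrow> j < dim_col A * dim_col B \<Longrightarrow>
   kron A B $$ (i, j) = A $$ (i div dim_row B, j div dim_col B) * B $$ (i mod dim_row B, j mod dim_col B)"
  by (simp add: kron_def)

lemma kron_carrier:
  "A \<in> carrier_mat n1 k1 \<Longrightarrow> B \<in> carrier_mat n2 k2 \<Longrightarrow> kron A B \<in> carrier_mat (n1 * n2) (k1 * k2)"
  by auto

lemma kron_mult:
  assumes "A \<in> carrier_mat n1 k1" "B \<in> carrier_mat n2 k2"
    and "C \<in> carrier_mat k1 l1" "D \<in> carrier_mat k2 l2"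
  shows "kron A B * kron C D = kron (A * C) (B * D)"
proof (rule eq_matI)
  fix i j
  assume "i < dim_row (kron (A * C) (B * D))" "j < dim_col (kron (A * C) (B * D))"
  then have i: "i < n1 * n2" and j: "j < l1 * l2"
    using assms by auto
  then have "0 < n2" "0 < l2"
    by (auto intro!: gr0I)
  with i j have idx: "i div n2 < n1" "i mod n2 < n2" "j div l2 < l1" "j mod l2 < l2"
    by (auto simp: less_mult_imp_div_less)
  with assms i j have "(kron A B * kron C D) $$ (i, j) =
      (\<Sum>t<k1 * k2. A $$ (i div n2, t div k2) * C $$ (t div k2, j div l2) *
                       (B $$ (i mod n2, t mod k2) * D $$ (t mod k2, j mod l2)))"
    by (simp add: scalar_prod_def atLeast0LessThan mult_ac)
  also have "\<dots> = (\<Sum>t<k1. A $$ (i div n2, t) * C $$ (t, j div l2)) *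
                   (\<Sum>t<k2. B $$ (i mod n2, t) * D $$ (t, j mod l2))"
    unfolding sum_product
    by (rule sum_lessThan_mult_div_mod[where g = "\<lambda>t u. A $$ (i div n2, t) * C $$ (t, j div l2) *
          (B $$ (i mod n2, u) * D $$ (u, j mod l2))"])
  also have "\<dots> = kron (A * C) (B * D) $$ (i, j)"
    using assms i j idx by (simp add: scalar_prod_def atLeast0LessThan)
  finally show "(kron A B * kron C D) $$ (i, j) = kron (A * C) (B * D) $$ (i, j)" .
qed (use assms in auto)

lemma mtrace_kron:
  assumes "A \<in> carrier_mat n n" "B \<in> carrier_mat m m"
  shows "mtrace (kron A B) = mtrace A * mtrace B"
  using assms sum_lessThan_mult_div_mod[where g = "\<lambda>i j. A $$ (i, i) * B $$ (j, j)"]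
  by (simp add: mtrace_def sum_product)

lemma mtrace_kron_mult:
  assumes "A \<in> carrier_mat n1 k1" "B \<in> carrier_mat n2 k2"
    and "C \<in> carrier_mat k1 n1" "D \<in> carrier_mat k2 n2"
  shows "mtrace (kron A B * kron C D) = mtrace (A * C) * mtrace (B * D)"
  using assms by (simp add: kron_mult mtrace_kron[of _ n1 _ n2])

lemma mtrace_add: "A \<in> carrier_mat n n \<Longrightarrow> B \<in> carrier_mat n n \<Longrightarrow> mtrace (A + B) = mtrace A + mtrace B"
  by (simp add: mtrace_def sum.distrib)

lemma mtrace_smult: "A \<in> carrier_mat n n \<Longrightarrow> mtrace (k \<cdot>\<^sub>m A) = k * mtrace A"
  by (simp add: mtrace_def sum_distrib_left)

lemma msum_carrier [simp]: "msum n S f \<in> carrier_mat n n"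
  by (simp add: msum_def)

lemma mtrace_msum:
  "(\<And>q. q \<in> S \<Longrightarrow> f q \<in> carrier_mat n n) \<Longrightarrow> mtrace (msum n S f) = (\<Sum>q\<in>S. mtrace (f q))"
  by (simp add: mtrace_def msum_def sum.swap[of _ S]) (auto intro!: sum.cong)

lemma msum_mult:
  assumes "\<And>q. q \<in> S \<Longrightarrow> f q \<in> carrier_mat n n" "P \<in> carrier_mat n n"
  shows "msum n S f * P = msum n S (\<lambda>q. f q * P)"
proof (rule eq_matI)
  fix i j assume "i < dim_row (msum n S (\<lambda>q. f q * P))" "j < dim_col (msum n S (\<lambda>q. f q * P))"
  then have "i < n" "j < n" by (simp_all add: msum_def)
  moreover have "(f q * P) $$ (i, j) = (\<Sum>k<n. f q $$ (i, k) * P $$ (k, j))" if "q \<in> S" for q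
    using assms(1)[OF that] assms(2) \<open>i < n\<close> \<open>j < n\<close> by (simp add: scalar_prod_def atLeast0LessThan)
  ultimately show "(msum n S f * P) $$ (i, j) = msum n S (\<lambda>q. f q * P) $$ (i, j)"
    using assms by (simp add: msum_def scalar_prod_def atLeast0LessThan sum_distrib_right sum.swap[of _ S])
qed (use assms in \<open>auto simp: msum_def\<close>)

lemma mtrace_mult_comm:
  assumes "A \<in> carrier_mat n m" "B \<in> carrier_mat m n"
  shows "mtrace (A * B) = mtrace (B * A)"
  using assms by (simp add: mtrace_def scalar_prod_def mult.commute atLeast0LessThan) (rule sum.swap)

subsection \<open>Sesquilinear forms\<close>

definition sesq :: "complex mat \<Rightarrow> complex vec \<Rightarrow> complex vec \<Rightarrow> complex" where
  "sesq M v w = (\<Sum>i<dim_row M. \<Sum>j<dim_col M. cnj (v $ i) * M $$ (i, j) * w $ j)"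

lemma sesq_add:
  "A \<in> carrier_mat n m \<Longrightarrow> B \<in> carrier_mat n m \<Longrightarrow> sesq (A + B) v w = sesq A v w + sesq B v w"
  by (simp add: sesq_def sum.distrib algebra_simps)

lemma sesq_smult: "sesq (k \<cdot>\<^sub>m A) v w = k * sesq A v w"
  by (simp add: sesq_def sum_distrib_left mult_ac)

lemma sesq_msum:
  "(\<And>q. q \<in> S \<Longrightarrow> f q \<in> carrier_mat n n) \<Longrightarrow> sesq (msum n S f) v w = (\<Sum>q\<in>S. sesq (f q) v w)"
  by (simp add: sesq_def msum_def sum_distrib_left sum_distrib_right sum.swap[of _ S])
    (auto intro!: sum.cong)

lemma psd_sesq_nonneg: "psd M \<Longrightarrow> v \<in> carrier_vec (dim_row M) \<Longrightarrow> 0 \<le> Re (sesq M v v)"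
  unfolding psd_def sesq_def by blast

lemma hermitian_sesq_swap:
  assumes "hermitian M"
  shows "sesq M w v = cnj (sesq M v w)"
proof -
  define n where "n = dim_row M"
  have dim: "dim_col M = n" and entry: "\<And>i j. i < n \<Longrightarrow> j < n \<Longrightarrow> cnj (M $$ (i, j)) = M $$ (j, i)"
    using assms unfolding hermitian_def n_def by (metis complex_cnj_cnj)+
  have "cnj (sesq M v w) = (\<Sum>i<n. \<Sum>j<n. cnj (w $ j) * M $$ (j, i) * v $ i)"
    unfolding sesq_def cnj_sum dim n_def[symmetric] using entry by (auto simp: mult_ac intro!: sum.cong)
  also have "\<dots> = sesq M w v"
    unfolding sesq_def dim n_def[symmetric] by (rule sum.swap)
  finally show ?thesis by simp
qed

lemma sesq_lincomb:
  assumes "M \<in> carrier_mat n n" "v \<in> carrier_vec n" "w \<in> carrier_vec n"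
  shows "sesq M (\<alpha> \<cdot>\<^sub>v v + \<beta> \<cdot>\<^sub>v w) (\<alpha> \<cdot>\<^sub>v v + \<beta> \<cdot>\<^sub>v w) =
    cnj \<alpha> * \<alpha> * sesq M v v + cnj \<alpha> * \<beta> * sesq M v w +
    cnj \<beta> * \<alpha> * sesq M w v + cnj \<beta> * \<beta> * sesq M w w"
proof -
  have "sesq M (\<alpha> \<cdot>\<^sub>v v + \<beta> \<cdot>\<^sub>v w) (\<alpha> \<cdot>\<^sub>v v + \<beta> \<cdot>\<^sub>v w) =
    (\<Sum>i<n. \<Sum>j<n.
       cnj \<alpha> * \<alpha> * (cnj (v $ i) * M $$ (i, j) * v $ j) + cnj \<alpha> * \<beta> * (cnj (v $ i) * M $$ (i, j) * w $ j) +
       cnj \<beta> * \<alpha> * (cnj (w $ i) * M $$ (i, j) * v $ j) + cnj \<beta> * \<beta> * (cnj (w $ i) * M $$ (i, j) * w $ j))"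
    unfolding sesq_def using assms by (auto intro!: sum.cong simp: algebra_simps)
  then show ?thesis
    using assms by (simp add: sesq_def sum.distrib sum_distrib_left)
qed

lemma psd_sesq_cross_le:
  assumes "hermitian M" "psd M" "M \<in> carrier_mat n n" "v \<in> carrier_vec n" "w \<in> carrier_vec n"
  shows "2 * cmod (sesq M v w) \<le> Re (sesq M v v) + Re (sesq M w w)"
proof -
  define z where "z = sesq M v w"
  define r where "r = cmod z"
  \<comment> \<open>at \<open>u = r v - z\<^sup>* w\<close> both cross terms equal \<open>-r\<^sup>3\<close>\<close>
  define u where "u = complex_of_real r \<cdot>\<^sub>v v + (- cnj z) \<cdot>\<^sub>v w"
  have zz: "z * cnj z = complex_of_real (r\<^sup>2)"
    unfolding r_def by (rule complex_norm_square[symmetric])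
  have "sesq M u u = complex_of_real (r\<^sup>2) * (sesq M v v + sesq M w w - 2 * complex_of_real r)"
    using assms zz unfolding u_def z_def
    by (simp add: sesq_lincomb hermitian_sesq_swap[OF assms(1), of v w] algebra_simps power2_eq_square)
  then have "Re (sesq M u u) = r\<^sup>2 * (Re (sesq M v v) + Re (sesq M w w) - 2 * r)"
    by simp
  moreover have "0 \<le> Re (sesq M u u)"
    using assms by (intro psd_sesq_nonneg) (auto simp: u_def)
  ultimately have "r = 0 \<or> 2 * r \<le> Re (sesq M v v) + Re (sesq M w w)"
    by (auto simp: zero_le_mult_iff)
  moreover have "0 \<le> Re (sesq M v v)" "0 \<le> Re (sesq M w w)"
    using assms by (auto intro!: psd_sesq_nonneg)
  ultimately show ?thesis
    unfolding r_def z_def by auto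
qed

definition kron_vec :: "complex vec \<Rightarrow> complex vec \<Rightarrow> complex vec" where
  "kron_vec x y = vec (dim_vec x * dim_vec y) (\<lambda>i. x $ (i div dim_vec y) * y $ (i mod dim_vec y))"

lemma kron_vec_carrier: "x \<in> carrier_vec n \<Longrightarrow> y \<in> carrier_vec m \<Longrightarrow> kron_vec x y \<in> carrier_vec (n * m)"
  by (simp add: kron_vec_def)

lemma sesq_kron:
  assumes "A \<in> carrier_mat n n" "B \<in> carrier_mat m m"
    and "x \<in> carrier_vec n" "x' \<in> carrier_vec n" "y \<in> carrier_vec m" "y' \<in> carrier_vec m"
  shows "sesq (kron A B) (kron_vec x y) (kron_vec x' y') = sesq A x x' * sesq B y y'"
proof -
  define F where "F a b c d = (cnj (x $ a) * A $$ (a, c) * x' $ c) * (cnj (y $ b) * B $$ (b, d) * y' $ d)"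
    for a b c d
  have "sesq (kron A B) (kron_vec x y) (kron_vec x' y') =
        (\<Sum>i<n * m. \<Sum>j<n * m. F (i div m) (i mod m) (j div m) (j mod m))"
    unfolding sesq_def F_def using assms
    by (auto simp: kron_vec_def less_mult_imp_div_less mult_ac intro!: sum.cong)
  also have "\<dots> = (\<Sum>a<n. \<Sum>b<m. \<Sum>j<n * m. F a b (j div m) (j mod m))"
    by (rule sum_lessThan_mult_div_mod)
  also have "\<dots> = (\<Sum>a<n. \<Sum>b<m. \<Sum>c<n. \<Sum>d<m. F a b c d)"
    by (simp add: sum_lessThan_mult_div_mod[where g = "F _ _"])
  also have "\<dots> = sesq A x x' * sesq B y y'"
    using assms unfolding sesq_def F_def
    by (simp add: sum_product)
  finally show ?thesis .
qed

lemma pauli_carrier [simp]: "pauli k \<in> carrier_mat 2 2"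
  by (rule carrier_matI) (auto simp: pauli_def mat_of_rows_list_def)

lemma kron_pauli_carrier [simp]: "kron (pauli k) (pauli l) \<in> carrier_mat 4 4"
  using kron_carrier[OF pauli_carrier pauli_carrier] by simp

lemma less_4_cases: "(k::nat) < 4 \<longleftrightarrow> k = 0 \<or> k = 1 \<or> k = 2 \<or> k = 3"
  by auto

lemma mtrace_mult_2:
  assumes "A \<in> carrier_mat 2 2" "B \<in> carrier_mat 2 2"
  shows "mtrace (A * B) = A $$ (0, 0) * B $$ (0, 0) + A $$ (0, 1) * B $$ (1, 0) +
                          A $$ (1, 0) * B $$ (0, 1) + A $$ (1, 1) * B $$ (1, 1)"
  using assms by (simp add: mtrace_def scalar_prod_def numeral_2_eq_2 lessThan_Suc atLeast0LessThan)

lemma sesq_2: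
  assumes "A \<in> carrier_mat 2 2"
  shows "sesq A v w = cnj (v $ 0) * A $$ (0, 0) * w $ 0 + cnj (v $ 0) * A $$ (0, 1) * w $ 1 +
                      cnj (v $ 1) * A $$ (1, 0) * w $ 0 + cnj (v $ 1) * A $$ (1, 1) * w $ 1"
  using assms by (simp add: sesq_def numeral_2_eq_2 lessThan_Suc)

lemma mtrace_pauli_mult:
  assumes "k < 4" "l < 4"
  shows "mtrace (pauli k * pauli l) = (if k = l then 2 else 0)"
  using assms unfolding less_4_cases mtrace_mult_2[OF pauli_carrier pauli_carrier]
  by (elim disjE) (simp_all add: pauli_def mat_of_rows_list_def)

lemma mtrace_kron_pauli_mult:
  assumes "k < 4" "l < 4" "i < 4" "j < 4"
  shows "mtrace (kron (pauli k) (pauli l) * kron (pauli i) (pauli j)) = (if k = i \<and> l = j then 4 else 0)"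
  using assms by (simp add: mtrace_kron_mult[of _ 2 2 _ 2 2] mtrace_pauli_mult)

subsection \<open>Characteristic polynomials of 3 \<times> 3 matrices\<close>

lemma det_2:
  assumes "(A :: 'a :: comm_ring_1 mat) \<in> carrier_mat 2 2"
  shows "det A = A $$ (0, 0) * A $$ (1, 1) - A $$ (0, 1) * A $$ (1, 0)"
proof -
  have "det A = (\<Sum>i<2. A $$ (i, 0) * cofactor A i 0)"
    by (rule laplace_expansion_column[OF assms]) simp
  also have "\<dots> = A $$ (0, 0) * A $$ (1, 1) - A $$ (0, 1) * A $$ (1, 0)"
    using assms
    by (simp add: numeral_2_eq_2 lessThan_Suc cofactor_def det_single mat_delete_def insert_index_def)
  finally show ?thesis .
qed

lemma det_3:
  assumes "(A :: 'a :: comm_ring_1 mat) \<in> carrier_mat 3 3"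
  shows "det A = A $$ (0, 0) * (A $$ (1, 1) * A $$ (2, 2) - A $$ (1, 2) * A $$ (2, 1))
     - A $$ (1, 0) * (A $$ (0, 1) * A $$ (2, 2) - A $$ (0, 2) * A $$ (2, 1))
     + A $$ (2, 0) * (A $$ (0, 1) * A $$ (1, 2) - A $$ (0, 2) * A $$ (1, 1))" (is "_ = ?rhs")
proof -
  have "det A = (\<Sum>i<3. A $$ (i, 0) * cofactor A i 0)"
    by (rule laplace_expansion_column[OF assms]) simp
  also have "\<dots> = ?rhs"
    using assms
    by (simp add: numeral_3_eq_3 lessThan_Suc cofactor_def det_2 mat_delete_def insert_index_def
        algebra_simps numeral_2_eq_2)
  finally show ?thesis .
qed

lemma sum_lessThan_3: "(\<Sum>k<3. f k) = f 0 + f 1 + (f (2 :: nat) :: 'a :: comm_monoid_add)"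
  by (simp add: numeral_3_eq_3 numeral_2_eq_2 lessThan_Suc add_ac)

lemma poly_char_poly_3:
  assumes "(N :: real mat) \<in> carrier_mat 3 3"
  shows "poly (char_poly N) x =
    (x - N $$ (0, 0)) * ((x - N $$ (1, 1)) * (x - N $$ (2, 2)) - N $$ (1, 2) * N $$ (2, 1))
    + N $$ (1, 0) * (- N $$ (0, 1) * (x - N $$ (2, 2)) - N $$ (0, 2) * N $$ (2, 1))
    - N $$ (2, 0) * (N $$ (0, 1) * N $$ (1, 2) + N $$ (0, 2) * (x - N $$ (1, 1)))"
proof -
  have "- char_matrix N x \<in> carrier_mat 3 3"
    using assms by (simp add: char_matrix_def)
  then show ?thesis
    unfolding char_poly_matrix[OF assms] det_3[OF \<open>- char_matrix N x \<in> carrier_mat 3 3\<close>]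
    using assms by (simp add: char_matrix_def algebra_simps)
qed

subsection \<open>States with maximally mixed marginals\<close>

definition correlation_state :: "(nat \<times> nat) set \<Rightarrow> (nat \<Rightarrow> nat \<Rightarrow> real) \<Rightarrow> complex mat" where
  "correlation_state S c = (1 / 4 :: complex) \<cdot>\<^sub>m (kron (pauli 0) (pauli 0) +
     msum 4 S (\<lambda>q. complex_of_real (c (fst q) (snd q)) \<cdot>\<^sub>m kron (pauli (fst q)) (pauli (snd q))))"

lemma correlation_state_carrier: "correlation_state S c \<in> carrier_mat 4 4"
  by (simp add: correlation_state_def)

lemma mtrace_correlation_state_mult:
  assumes "P \<in> carrier_mat 4 4"
  shows "mtrace (correlation_state S c * P) = 1 / 4 * (mtrace (kron (pauli 0) (pauli 0) * P) +
     (\<Sum>q\<in>S. complex_of_real (c (fst q) (snd q)) * mtrace (kron (pauli (fst q)) (pauli (snd q)) * P)))"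
proof -
  define F where "F q = complex_of_real (c (fst q) (snd q)) \<cdot>\<^sub>m kron (pauli (fst q)) (pauli (snd q))"
    for q :: "nat \<times> nat"
  define G where "G q = complex_of_real (c (fst q) (snd q)) \<cdot>\<^sub>m (kron (pauli (fst q)) (pauli (snd q)) * P)"
    for q :: "nat \<times> nat"
  have F: "F q \<in> carrier_mat 4 4" for q
    by (simp add: F_def)
  have G: "G q \<in> carrier_mat 4 4" for q
    by (simp add: G_def mult_carrier_mat[OF kron_pauli_carrier assms])
  have FG: "F q * P = G q" for q
    unfolding F_def G_def using assms by (simp add: mult_smult_assoc_mat[of _ 4 4])
  have "correlation_state S c * P = (1 / 4) \<cdot>\<^sub>m (kron (pauli 0) (pauli 0) * P + msum 4 S G)"
    unfolding correlation_state_def F_def[symmetric] using assms F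
    by (simp add: mult_smult_assoc_mat[of _ 4 4] add_mult_distrib_mat[of _ 4 4] msum_mult FG)
  also have "mtrace \<dots> = 1 / 4 * (mtrace (kron (pauli 0) (pauli 0) * P) + mtrace (msum 4 S G))"
    using mult_carrier_mat[OF kron_pauli_carrier assms] msum_carrier[of 4 S G]
    by (simp add: mtrace_smult[where n = 4] mtrace_add[where n = 4])
  also have "mtrace (msum 4 S G) = (\<Sum>q\<in>S. complex_of_real (c (fst q) (snd q)) *
                                     mtrace (kron (pauli (fst q)) (pauli (snd q)) * P))"
    using G mult_carrier_mat[OF kron_pauli_carrier assms]
    by (simp add: mtrace_msum[where n = 4] G_def mtrace_smult[where n = 4])
  finally show ?thesis .
qed

lemma mtrace_correlation_state_mult_pauli:
  assumes S: "S \<subseteq> {1, 2, 3} \<times> {1, 2, 3}" and "k < 4" "l < 4"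
  shows "mtrace (correlation_state S c * kron (pauli k) (pauli l)) =
         (if (k, l) \<in> S then complex_of_real (c k l) else if (k, l) = (0, 0) then 1 else 0)"
proof -
  have "finite S"
    using S by (rule finite_subset) simp
  have S4: "fst q < 4" "snd q < 4" if "q \<in> S" for q
    using S that by auto
  have "(\<Sum>q\<in>S. complex_of_real (c (fst q) (snd q)) * mtrace (kron (pauli (fst q)) (pauli (snd q)) * kron (pauli k) (pauli l))) =
        (\<Sum>q\<in>S. if q = (k, l) then 4 * complex_of_real (c k l) else 0)"
    using assms S4 by (intro sum.cong refl) (auto simp: mtrace_kron_pauli_mult)
  also have "\<dots> = (if (k, l) \<in> S then 4 * complex_of_real (c k l) else 0)"
    using \<open>finite S\<close> by (simp add: sum.delta')
  finally show ?thesis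
    using assms by (auto simp: mtrace_correlation_state_mult mtrace_kron_pauli_mult)
qed

lemma corr_correlation_state:
  assumes "S \<subseteq> {1, 2, 3} \<times> {1, 2, 3}"
  shows "corr (correlation_state S c) = mat 3 3 (\<lambda>(i, j). if (i + 1, j + 1) \<in> S then c (i + 1) (j + 1) else 0)"
  by (rule eq_matI) (auto simp: corr_def mtrace_correlation_state_mult_pauli[OF assms])

lemma mtrace_correlation_state_square:
  assumes S: "S \<subseteq> {1, 2, 3} \<times> {1, 2, 3}"
  shows "mtrace (correlation_state S c * correlation_state S c) =
         complex_of_real ((1 + (\<Sum>q\<in>S. (c (fst q) (snd q))\<^sup>2)) / 4)"
proof -
  have S4: "fst q < 4" "snd q < 4" if "q \<in> S" for q
    using S that by auto
  have coeff: "mtrace (kron (pauli k) (pauli l) * correlation_state S c) =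
               mtrace (correlation_state S c * kron (pauli k) (pauli l))" for k l
    by (rule mtrace_mult_comm[OF kron_pauli_carrier correlation_state_carrier])
  have "(\<Sum>q\<in>S. complex_of_real (c (fst q) (snd q)) * mtrace (kron (pauli (fst q)) (pauli (snd q)) * correlation_state S c)) =
        (\<Sum>q\<in>S. complex_of_real ((c (fst q) (snd q))\<^sup>2))"
    using S S4 by (intro sum.cong refl) (auto simp: coeff mtrace_correlation_state_mult_pauli power2_eq_square)
  moreover have "(0, 0) \<notin> S"
    using S by auto
  ultimately show ?thesis
    using S by (simp add: mtrace_correlation_state_mult[OF correlation_state_carrier] coeff
        mtrace_correlation_state_mult_pauli)
qed

lemma sesq_correlation_state_kron_vec:
  assumes "x \<in> carrier_vec 2" "x' \<in> carrier_vec 2" "y \<in> carrier_vec 2" "y' \<in> carrier_vec 2"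
  shows "sesq (correlation_state S c) (kron_vec x y) (kron_vec x' y') =
    1 / 4 * (sesq (pauli 0) x x' * sesq (pauli 0) y y' +
      (\<Sum>q\<in>S. complex_of_real (c (fst q) (snd q)) * (sesq (pauli (fst q)) x x' * sesq (pauli (snd q)) y y')))"
  using assms
  by (simp add: correlation_state_def sesq_smult sesq_add[where n = 4 and m = 4] sesq_msum[where n = 4]
      sesq_kron[where n = 2 and m = 2])

subsection \<open>States supported on \<open>support_pairs a b\<close>\<close>

definition compl_lo :: "nat \<Rightarrow> nat" where
  "compl_lo a = (if a = 1 then 2 else 1)"

definition compl_hi :: "nat \<Rightarrow> nat" where
  "compl_hi a = (if a = 3 then 2 else 3)"

lemma compl_lo_hi: "a \<in> {1, 2, 3} \<Longrightarrow> {1, 2, 3} - {a} = {compl_lo a, compl_hi a}"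
  by (auto simp: compl_lo_def compl_hi_def)

lemma support_pairs_eq:
  assumes "a \<in> {1, 2, 3}" "b \<in> {1, 2, 3}"
  shows "support_pairs a b = {(a, b), (compl_lo a, compl_lo b), (compl_lo a, compl_hi b),
                              (compl_hi a, compl_lo b), (compl_hi a, compl_hi b)}"
proof -
  have "{(i, j). i \<in> {x, y} \<and> j \<in> {u, w}} = {(x, u), (x, w), (y, u), (y, w)}" for x y u w :: nat
    by auto
  then show ?thesis
    unfolding support_pairs_def compl_lo_hi[OF assms(1)] compl_lo_hi[OF assms(2)] by (simp add: insert_commute)
qed

lemma support_pairs_subset:
  "a \<in> {1, 2, 3} \<Longrightarrow> b \<in> {1, 2, 3} \<Longrightarrow> support_pairs a b \<subseteq> {1, 2, 3} \<times> {1, 2, 3}"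
  by (auto simp: support_pairs_def)

definition cblock_sqnorm :: "nat \<Rightarrow> nat \<Rightarrow> (nat \<Rightarrow> nat \<Rightarrow> real) \<Rightarrow> real" where
  "cblock_sqnorm a b c = (c (compl_lo a) (compl_lo b))\<^sup>2 + (c (compl_lo a) (compl_hi b))\<^sup>2 +
                         (c (compl_hi a) (compl_lo b))\<^sup>2 + (c (compl_hi a) (compl_hi b))\<^sup>2"

definition cblock_det :: "nat \<Rightarrow> nat \<Rightarrow> (nat \<Rightarrow> nat \<Rightarrow> real) \<Rightarrow> real" where
  "cblock_det a b c = c (compl_lo a) (compl_lo b) * c (compl_hi a) (compl_hi b) -
                      c (compl_lo a) (compl_hi b) * c (compl_hi a) (compl_lo b)"

lemma index_cases:
  assumes "a \<in> {1, 2, 3::nat}" "b \<in> {1, 2, 3::nat}"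
  obtains "a = 1" "b = 1" | "a = 1" "b = 2" | "a = 1" "b = 3" | "a = 2" "b = 1" | "a = 2" "b = 2"
    | "a = 2" "b = 3" | "a = 3" "b = 1" | "a = 3" "b = 2" | "a = 3" "b = 3"
  using assms by auto

lemma sum_support_pairs_square:
  assumes "a \<in> {1, 2, 3}" "b \<in> {1, 2, 3}"
  shows "(\<Sum>q\<in>support_pairs a b. (c (fst q) (snd q))\<^sup>2) = (c a b)\<^sup>2 + cblock_sqnorm a b c"
  unfolding support_pairs_eq[OF assms]
  by (rule index_cases[OF assms]) (simp_all add: cblock_sqnorm_def compl_lo_def compl_hi_def)

(* s = True selects the eigenvalue +1.  All eigenvectors have squared norm 2, which for
   pauli 3 needs the phase 1 + i. *)
definition pauli_eigvec :: "nat \<Rightarrow> bool \<Rightarrow> complex vec" where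
  "pauli_eigvec a s = (let \<sigma> = (if s then 1 else -1) in
     if a = 1 then vec 2 (\<lambda>j. if j = 0 then 1 else \<sigma>)
     else if a = 2 then vec 2 (\<lambda>j. if j = 0 then 1 else \<sigma> * \<i>)
     else vec 2 (\<lambda>j. if (j = 0) = s then 1 + \<i> else 0))"

lemma pauli_eigvec_carrier [simp]: "pauli_eigvec a s \<in> carrier_vec 2"
  by (simp add: pauli_eigvec_def Let_def)

definition product_eigvec :: "nat \<Rightarrow> nat \<Rightarrow> bool \<Rightarrow> bool \<Rightarrow> complex vec" where
  "product_eigvec a b s t = kron_vec (pauli_eigvec a s) (pauli_eigvec b t)"

lemma sesq_pauli_eigvec:
  assumes "a \<in> {1, 2, 3}" "k < 4"
  shows "sesq (pauli k) (pauli_eigvec a s) (pauli_eigvec a s) =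
         (if k = 0 then 2 else if k = a then (if s then 2 else -2) else 0)"
  using assms unfolding sesq_2[OF pauli_carrier] less_4_cases
  by (auto simp: pauli_def mat_of_rows_list_def pauli_eigvec_def complex_eq_iff)

lemma sesq_product_eigvec_diag:
  assumes ab: "a \<in> {1, 2, 3}" "b \<in> {1, 2, 3}"
  shows "sesq (correlation_state (support_pairs a b) c) (product_eigvec a b s t) (product_eigvec a b s t) =
         complex_of_real (1 + (if s = t then c a b else - c a b))"
proof -
  let ?S = "support_pairs a b"
  let ?e = "\<lambda>k x u. sesq (pauli k) (pauli_eigvec x u) (pauli_eigvec x u)"
  have S: "?S \<subseteq> {1, 2, 3} \<times> {1, 2, 3}"
    using support_pairs_subset[OF ab] .
  then have "finite ?S"
    by (rule finite_subset) simp
  have "(a, b) \<in> ?S"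
    by (simp add: support_pairs_def)
  have off: "fst q \<noteq> a \<and> snd q \<noteq> b" if "q \<in> ?S" "q \<noteq> (a, b)" for q
    using that by (auto simp: support_pairs_def)
  have "(\<Sum>q\<in>?S. complex_of_real (c (fst q) (snd q)) * (?e (fst q) a s * ?e (snd q) b t)) =
        (\<Sum>q\<in>?S. if q = (a, b) then complex_of_real (c a b) * (?e a a s * ?e b b t) else 0)"
  proof (rule sum.cong[OF refl])
    fix q assume "q \<in> ?S"
    with S off[of q] show "complex_of_real (c (fst q) (snd q)) * (?e (fst q) a s * ?e (snd q) b t) =
        (if q = (a, b) then complex_of_real (c a b) * (?e a a s * ?e b b t) else 0)"
      using ab by (auto simp: sesq_pauli_eigvec)
  qed
  also have "\<dots> = complex_of_real (c a b) * (?e a a s * ?e b b t)"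
    using \<open>finite ?S\<close> \<open>(a, b) \<in> ?S\<close> by (simp add: sum.delta')
  finally have sum: "(\<Sum>q\<in>?S. complex_of_real (c (fst q) (snd q)) * (?e (fst q) a s * ?e (snd q) b t)) =
                     complex_of_real (c a b) * (?e a a s * ?e b b t)" .
  have "?e 0 x u = 2" "?e x x u = (if u then 2 else -2)" if "x \<in> {1, 2, 3}" for x u
    using that by (auto simp: sesq_pauli_eigvec)
  with sum ab show ?thesis
    unfolding product_eigvec_def by (simp add: sesq_correlation_state_kron_vec)
qed

lemma sesq_product_eigvec_cross:
  fixes c :: "nat \<Rightarrow> nat \<Rightarrow> real"
  assumes ab: "a \<in> {1, 2, 3}" "b \<in> {1, 2, 3}"
  defines "z1 \<equiv> sesq (correlation_state (support_pairs a b) c)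
                  (product_eigvec a b True True) (product_eigvec a b False False)"
    and "z2 \<equiv> sesq (correlation_state (support_pairs a b) c)
                  (product_eigvec a b True False) (product_eigvec a b False True)"
  shows "(cmod z1)\<^sup>2 + (cmod z2)\<^sup>2 = 2 * cblock_sqnorm a b c"
    and "((cmod z1)\<^sup>2 - (cmod z2)\<^sup>2)\<^sup>2 = 16 * (cblock_det a b c)\<^sup>2"
proof -
  note defs = z1_def z2_def product_eigvec_def support_pairs_eq[OF ab] sesq_2[OF pauli_carrier] cmod_power2
    sesq_correlation_state_kron_vec[OF pauli_eigvec_carrier pauli_eigvec_carrier pauli_eigvec_carrier pauli_eigvec_carrier]
  note vals = compl_lo_def compl_hi_def pauli_def mat_of_rows_list_def pauli_eigvec_def cblock_sqnorm_def cblock_det_def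
  show "(cmod z1)\<^sup>2 + (cmod z2)\<^sup>2 = 2 * cblock_sqnorm a b c"
    unfolding defs by (rule index_cases[OF ab]; simp add: vals; simp add: field_simps power2_eq_square)
  show "((cmod z1)\<^sup>2 - (cmod z2)\<^sup>2)\<^sup>2 = 16 * (cblock_det a b c)\<^sup>2"
    unfolding defs by (rule index_cases[OF ab]; simp add: vals; simp add: field_simps power2_eq_square)
qed

lemma char_poly_corr_gram:
  fixes c :: "nat \<Rightarrow> nat \<Rightarrow> real"
  assumes ab: "a \<in> {1, 2, 3}" "b \<in> {1, 2, 3}"
  defines "\<beta> \<equiv> corr (correlation_state (support_pairs a b) c)"
  shows "char_poly (transpose_mat \<beta> * \<beta>) =
         [:- (c a b)\<^sup>2, 1:] * [:(cblock_det a b c)\<^sup>2, - cblock_sqnorm a b c, 1:]"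
proof -
  have \<beta>: "\<beta> = mat 3 3 (\<lambda>(i, j). if (i + 1, j + 1) \<in> support_pairs a b then c (i + 1) (j + 1) else 0)"
    unfolding \<beta>_def by (rule corr_correlation_state[OF support_pairs_subset[OF ab]])
  have gram: "transpose_mat \<beta> * \<beta> = mat 3 3 (\<lambda>(i, j). \<Sum>k<3. \<beta> $$ (k, i) * \<beta> $$ (k, j))"
    by (rule eq_matI) (simp_all add: \<beta> scalar_prod_def atLeast0LessThan)
  have "poly (char_poly (transpose_mat \<beta> * \<beta>)) x =
        poly ([:- (c a b)\<^sup>2, 1:] * [:(cblock_det a b c)\<^sup>2, - cblock_sqnorm a b c, 1:]) x" for x
    unfolding gram poly_char_poly_3[OF mat_carrier]
    unfolding \<beta> support_pairs_eq[OF ab]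
    by (rule index_cases[OF ab];
        simp add: sum_lessThan_3 compl_lo_def compl_hi_def cblock_sqnorm_def cblock_det_def;
        simp add: algebra_simps power2_eq_square numeral_2_eq_2 numeral_3_eq_3)
  then show ?thesis
    using poly_eq_poly_eq_iff by blast
qed

lemma eigvals_corr_gram:
  assumes ab: "a \<in> {1, 2, 3}" "b \<in> {1, 2, 3}"
    and block: "u\<^sup>2 + w\<^sup>2 = 2 * cblock_sqnorm a b c" "(u\<^sup>2 - w\<^sup>2)\<^sup>2 = 16 * (cblock_det a b c)\<^sup>2"
  shows "eigvals_ms (transpose_mat (corr (correlation_state (support_pairs a b) c)) *
                     corr (correlation_state (support_pairs a b) c)) =
         {#(c a b)\<^sup>2, ((u + w) / 2)\<^sup>2, ((u - w) / 2)\<^sup>2#}"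
proof -
  define y z where "y = ((u + w) / 2)\<^sup>2" and "z = ((u - w) / 2)\<^sup>2"
  have "y + z = cblock_sqnorm a b c"
    using block(1) unfolding y_def z_def by (simp add: field_simps power2_eq_square)
  moreover have "y * z = (cblock_det a b c)\<^sup>2"
  proof -
    have "y * z = (u\<^sup>2 - w\<^sup>2)\<^sup>2 / 16"
      unfolding y_def z_def by (simp add: power_mult_distrib[symmetric] field_simps power2_eq_square)
    then show ?thesis
      using block(2) by simp
  qed
  ultimately have "[:(cblock_det a b c)\<^sup>2, - cblock_sqnorm a b c, 1:] = [:- y, 1:] * [:- z, 1:]"
    by (simp add: algebra_simps)
  then show ?thesis
    unfolding eigvals_ms_def char_poly_corr_gram[OF ab] y_def z_def
    by (simp add: proots_mult del: mult_pCons_left mult_pCons_right)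
qed

lemma sum_top_two_of_three:
  fixes x y z :: "'a :: {linordered_ab_group_add}"
  shows "sum_list (take 2 (rev (sorted_list_of_multiset {#x, y, z#}))) = x + y + z - min x (min y z)"
proof -
  define l where "l = sorted_list_of_multiset {#x, y, z#}"
  have m: "mset l = {#x, y, z#}"
    unfolding l_def by simp
  then have "length l = 3"
    using size_mset[of l] by simp
  then obtain l0 l1 l2 where l: "l = [l0, l1, l2]"
    by (metis (no_types, opaque_lifting) length_0_conv length_Suc_conv numeral_3_eq_3)
  have sorted: "l0 \<le> l1" "l1 \<le> l2"
    using sorted_sorted_list_of_multiset[of "{#x, y, z#}"] unfolding l_def[symmetric] l by auto
  have "{l0, l1, l2} = {x, y, z}"
    using arg_cong[OF m, of set_mset] unfolding l by simp
  then have "x \<in> {l0, l1, l2}" "y \<in> {l0, l1, l2}" "z \<in> {l0, l1, l2}" "l0 \<in> {x, y, z}"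
    by auto
  with sorted have "l0 = min x (min y z)"
    by auto
  moreover have "l0 + l1 + l2 = x + y + z"
    using arg_cong[OF m, of sum_mset] unfolding l by (simp add: add_ac)
  ultimately show ?thesis
    unfolding l_def[symmetric] l by (simp add: algebra_simps)
qed

lemma correlation_state_psd_bounds:
  assumes ab: "a \<in> {1, 2, 3}" "b \<in> {1, 2, 3}"
    and valid: "valid_state (correlation_state (support_pairs a b) c)"
  obtains u w where "0 \<le> u" "0 \<le> w" "u \<le> 1 + c a b" "w \<le> 1 - c a b"
    "u\<^sup>2 + w\<^sup>2 = 2 * cblock_sqnorm a b c" "(u\<^sup>2 - w\<^sup>2)\<^sup>2 = 16 * (cblock_det a b c)\<^sup>2"
proof -
  let ?\<rho> = "correlation_state (support_pairs a b) c"
  let ?v = "product_eigvec a b"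
  have \<rho>: "hermitian ?\<rho>" "psd ?\<rho>" "?\<rho> \<in> carrier_mat 4 4"
    using valid by (auto simp: valid_state_def)
  have v: "?v s t \<in> carrier_vec 4" for s t
    using kron_vec_carrier[OF pauli_eigvec_carrier pauli_eigvec_carrier] by (simp add: product_eigvec_def)
  let ?z1 = "sesq ?\<rho> (?v True True) (?v False False)" and ?z2 = "sesq ?\<rho> (?v True False) (?v False True)"
  have "2 * cmod ?z1 \<le> (1 + c a b) + (1 + c a b)"
    using psd_sesq_cross_le[OF \<rho> v[of True True] v[of False False]] by (simp add: sesq_product_eigvec_diag[OF ab])
  moreover have "2 * cmod ?z2 \<le> (1 - c a b) + (1 - c a b)"
    using psd_sesq_cross_le[OF \<rho> v[of True False] v[of False True]] by (simp add: sesq_product_eigvec_diag[OF ab])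
  ultimately show ?thesis
    using sesq_product_eigvec_cross[OF ab, of c] by (intro that[of "cmod ?z1" "cmod ?z2"]) auto
qed

lemma sum_top_two_eq_two_iff:
  fixes e u w :: real
  assumes "0 \<le> u" "0 \<le> w" "u \<le> 1 + e" "w \<le> 1 - e"
  defines "y \<equiv> ((u + w) / 2)\<^sup>2" and "z \<equiv> ((u - w) / 2)\<^sup>2"
  shows "e\<^sup>2 + y + z - min (e\<^sup>2) (min y z) = 2 \<longleftrightarrow> e\<^sup>2 + y + z = 3"
proof -
  have "\<bar>e\<bar> \<le> 1" "\<bar>(u + w) / 2\<bar> \<le> 1" "\<bar>(u - w) / 2\<bar> \<le> \<bar>(u + w) / 2\<bar>"
    using assms(1-4) by auto
  then have x1: "e\<^sup>2 \<le> 1" and y1: "y \<le> 1" and zy: "z \<le> y"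
    unfolding y_def z_def by (simp_all only: abs_le_square_iff abs_square_le_1)
  have tight: "z = e\<^sup>2" if "y = 1"
  proof -
    have "u + w = 2"
      using that assms(1,2) unfolding y_def by (simp add: power2_eq_1_iff)
    then have "u = 1 + e" "w = 1 - e"
      using assms(3,4) by linarith+
    then show ?thesis
      unfolding z_def by simp
  qed
  show ?thesis
  proof
    assume top2: "e\<^sup>2 + y + z - min (e\<^sup>2) (min y z) = 2"
    then have "y = 1"
      using x1 y1 zy by (auto simp: min_def split: if_splits)
    with top2 tight show "e\<^sup>2 + y + z = 3"
      by (auto simp: min_def split: if_splits)
  next
    assume "e\<^sup>2 + y + z = 3"
    then have "e\<^sup>2 = 1" "y = 1" "z = 1"
      using x1 y1 zy by linarith+
    then show "e\<^sup>2 + y + z - min (e\<^sup>2) (min y z) = 2"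
      by simp
  qed
qed

theorem proposition6:
  fixes \<rho> :: "complex mat" and a b :: nat and c :: "nat \<Rightarrow> nat \<Rightarrow> real"
  assumes "a \<in> {1, 2, 3}" and "b \<in> {1, 2, 3}"
    and "valid_state \<rho>"
    and "\<rho> = (1 / 4 :: complex) \<cdot>\<^sub>m (kron (pauli 0) (pauli 0) +
           msum 4 (support_pairs a b) (\<lambda>q. complex_of_real (c (fst q) (snd q)) \<cdot>\<^sub>m
               kron (pauli (fst q)) (pauli (snd q))))"
  shows "horodecki_M \<rho> = 2 \<longleftrightarrow> mtrace (\<rho> * \<rho>) = 1"
proof -
  note ab = assms(1,2)
  have \<rho>: "\<rho> = correlation_state (support_pairs a b) c"
    using assms(4) by (simp add: correlation_state_def)
  obtain u w where bounds: "0 \<le> u" "0 \<le> w" "u \<le> 1 + c a b" "w \<le> 1 - c a b"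
    and block: "u\<^sup>2 + w\<^sup>2 = 2 * cblock_sqnorm a b c" "(u\<^sup>2 - w\<^sup>2)\<^sup>2 = 16 * (cblock_det a b c)\<^sup>2"
    using correlation_state_psd_bounds[OF ab] assms(3) unfolding \<rho> by blast
  define y z where "y = ((u + w) / 2)\<^sup>2" and "z = ((u - w) / 2)\<^sup>2"
  have "horodecki_M \<rho> = (c a b)\<^sup>2 + y + z - min ((c a b)\<^sup>2) (min y z)"
    unfolding horodecki_M_def Let_def \<rho> eigvals_corr_gram[OF ab block] y_def z_def sum_top_two_of_three ..
  moreover have "y + z = cblock_sqnorm a b c"
    using block(1) unfolding y_def z_def by (simp add: field_simps power2_eq_square)
  then have "mtrace (\<rho> * \<rho>) = 1 \<longleftrightarrow> (c a b)\<^sup>2 + y + z = 3"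
    unfolding \<rho> mtrace_correlation_state_square[OF support_pairs_subset[OF ab]] sum_support_pairs_square[OF ab]
    by (simp add: complex_eq_iff) linarith
  ultimately show ?thesis
    using sum_top_two_eq_two_iff[OF bounds] unfolding y_def z_def by simp
qed

end
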